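(* Let $\mathbf A\in\mathbb R^{2\times2}_{\rm sym}$ be positive definite with eigenvalues $a_1,a_2$, let $\delta:=\frac12\sqrt{\operatorname{tr}^2\log\mathbf A-4\det\log\mathbf A}=\frac12|\log a_1-\log a_2|$, and let $\theta(x):=\frac2{\sinh(2x)}-\frac1x$ for $x\ne0$, with $\frac{\theta(\delta)}{\delta}$ understood as $\lim_{x\to0}\frac{\theta(x)}x=-\frac23$ when $\delta=0$. Then for all $\mathbf X\in\mathbb R^{2\times2}$, writing $\mathbf L=\log\mathbf A$ and $\mathbf Z:=\mathbf L^2\mathbf X-2\mathbf L\mathbf X\mathbf L+\mathbf X\mathbf L^2$, $\lim_{s\to0}\frac{\log(\mathbf A+s\mathbf X)-\log\mathbf A}{s}=\frac12(\mathbf A^{-1}\mathbf X+\mathbf X\mathbf A^{-1})+\frac{\theta(\delta)}{8\delta}\big(\mathbf A^{-1}\mathbf Z+\mathbf Z\mathbf A^{-1}\big),$ where $\frac{d\log\mathbf A}{d\mathbf A}\mathbf X$ on the left is the Fréchet derivative of the matrix logarithm (extended linearly to nonsymmetric directions via the Daleckiĭ–Kreĭn formula).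
   Context: $\log\mathbf A$ denotes the spectrally defined matrix logarithm of a symmetric positive definite matrix. For non-symmetric $\mathbf X$, the left-hand side is to be understood as $\frac{d\log\mathbf A}{d\mathbf A}\mathbf X:=\mathbf Q\big([F(a_i,a_j)]\odot(\mathbf Q^{\mathsf T}\mathbf X\mathbf Q)\big)\mathbf Q^{\mathsf T}$ where $\mathbf A=\mathbf Q\operatorname{diag}(a_1,a_2)\mathbf Q^{\mathsf T}$, $\odot$ is the entrywise product, $F(x,y)=\frac{\log x-\log y}{x-y}$ for $x\ne y$ and $F(x,x)=1/x$. *)

theory Defs
  imports "HOL-Analysis.Analysis"
begin

type_synonym mat2 = "real^2^2"

definition mdiag :: "(2 \<Rightarrow> real) \<Rightarrow> mat2" where
  "mdiag a = (\<chi> i j. if i = j then a i else 0)"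

definition spd :: "mat2 \<Rightarrow> bool" where
  "spd A \<longleftrightarrow> transpose A = A \<and> (\<forall>x::real^2. x \<noteq> 0 \<longrightarrow> x \<bullet> (A *v x) > 0)"

definition spec_decomp :: "mat2 \<Rightarrow> mat2 \<Rightarrow> (2 \<Rightarrow> real) \<Rightarrow> bool" where
  "spec_decomp A Q a \<longleftrightarrow> orthogonal_matrix Q \<and> A = Q ** mdiag a ** transpose Q"

definition mlog :: "mat2 \<Rightarrow> mat2" where
  "mlog A = (SOME L. \<exists>Q a. spec_decomp A Q a \<and> L = Q ** mdiag (\<lambda>i. ln (a i)) ** transpose Q)"

definition Flog :: "real \<Rightarrow> real \<Rightarrow> real" where
  "Flog x y = (if x = y then 1 / x else (ln x - ln y) / (x - y))"

definition DK_log :: "mat2 \<Rightarrow> (2 \<Rightarrow> real) \<Rightarrow> mat2 \<Rightarrow> mat2" where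
  "DK_log Q a X = Q ** (\<chi> i j. Flog (a i) (a j) * (transpose Q ** X ** Q) $ i $ j) ** transpose Q"

definition theta :: "real \<Rightarrow> real" where
  "theta x = 2 / sinh (2 * x) - 1 / x"

definition theta_over :: "real \<Rightarrow> real" where
  "theta_over d = (if d = 0 then - 2 / 3 else theta d / d)"

definition log_delta :: "mat2 \<Rightarrow> real" where
  "log_delta A = sqrt ((trace (mlog A))^2 - 4 * det (mlog A)) / 2"

definition dlog_rhs :: "mat2 \<Rightarrow> mat2 \<Rightarrow> mat2" where
  "dlog_rhs A X =
    (let L = mlog A; Ai = matrix_inv A; Z = L ** L ** X - 2 *\<^sub>R (L ** X ** L) + X ** L ** L
     in (1/2) *\<^sub>R (Ai ** X + X ** Ai) + (theta_over (log_delta A) / 8) *\<^sub>R (Ai ** Z + Z ** Ai))"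

end

theory Submission
  imports Defs
begin

text \<open>
  Conjugating by an eigenbasis \<open>Q\<close> of \<open>A\<close> reduces both claims to \<open>A = diag(a\<^sub>1, a\<^sub>2)\<close>,
  \<open>X = Q Y Q\<^sup>T\<close>. There \<open>Z\<close> has entries \<open>(ln a\<^sub>i - ln a\<^sub>j)\<^sup>2 Y\<^sub>i\<^sub>j\<close>, and because
  \<open>1/2 + \<theta>(\<delta>) \<delta> / 2 = \<delta> / sinh(2\<delta>)\<close> and \<open>sinh(ln a\<^sub>i - ln a\<^sub>j) = (a\<^sub>i/a\<^sub>j - a\<^sub>j/a\<^sub>i)/2\<close>, the
  right-hand side multiplies \<open>Y\<^sub>i\<^sub>j\<close> by exactly the divided difference \<open>F(a\<^sub>i, a\<^sub>j)\<close>: it is the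
  Daleckii--Krein expression.

  For the derivative, a symmetric \<open>M\<close> with eigenvalues \<open>x, y\<close> satisfies
  \<open>log M = ln x I + F(x, y) (M - x I)\<close>, the linear interpolant of \<open>ln\<close> on its spectrum. If
  \<open>a\<^sub>1 \<noteq> a\<^sub>2\<close>, the eigenvalues \<open>x\<^sub>i(s)\<close> of \<open>diag(a) + s Y\<close> can be chosen differentiable with
  \<open>x\<^sub>i(0) = a\<^sub>i\<close> and \<open>x\<^sub>i'(0) = Y\<^sub>i\<^sub>i\<close>. Interpolating at \<open>x\<^sub>i\<close> in the \<open>i\<close>-th diagonal entry, the
  correction \<open>a\<^sub>i + s Y\<^sub>i\<^sub>i - x\<^sub>i(s)\<close> is \<open>o(s)\<close>, which leaves \<open>(ln x\<^sub>i)'(0) = Y\<^sub>i\<^sub>i / a\<^sub>i\<close>; the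
  off-diagonal entries are \<open>F(x\<^sub>1, x\<^sub>2) s Y\<^sub>1\<^sub>2\<close>. If \<open>a\<^sub>1 = a\<^sub>2\<close>, then \<open>A\<close> is scalar and an
  eigenbasis of \<open>Y\<close> diagonalises the whole path \<open>A + s X\<close>.
\<close>

section \<open>Matrices of size two in coordinates\<close>

definition mat2_of :: "real \<Rightarrow> real \<Rightarrow> real \<Rightarrow> real \<Rightarrow> mat2" where
  "mat2_of a b c d = (\<chi> i j. if i = 1 then (if j = 1 then a else b) else (if j = 1 then c else d))"

lemma mat2_of_nth [simp]:
  "mat2_of a b c d $ 1 $ 1 = a" "mat2_of a b c d $ 1 $ 2 = b"
  "mat2_of a b c d $ 2 $ 1 = c" "mat2_of a b c d $ 2 $ 2 = d"
  by (simp_all add: mat2_of_def)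

lemma mat2_eq_mat2_of: "M = mat2_of (M$1$1) (M$1$2) (M$2$1) (M$2$2)"
  by (simp add: mat2_of_def vec_eq_iff forall_2)

lemma mat2_of_mult:
  "mat2_of a b c d ** mat2_of e f g h = mat2_of (a*e + b*g) (a*f + b*h) (c*e + d*g) (c*f + d*h)"
  by (simp add: mat2_of_def matrix_matrix_mult_def vec_eq_iff forall_2 sum_2)

lemma transpose_mat2_of: "transpose (mat2_of a b c d) = mat2_of a c b d"
  by (simp add: mat2_of_def transpose_def vec_eq_iff forall_2)

lemma mdiag_eq_mat2_of: "mdiag a = mat2_of (a 1) 0 0 (a 2)"
  by (simp add: mat2_of_def mdiag_def vec_eq_iff forall_2)

lemma mat_eq_mat2_of: "(mat x :: mat2) = mat2_of x 0 0 x"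
  by (simp add: mat2_of_def mat_def vec_eq_iff forall_2)

lemma mat2_of_eq_iff: "mat2_of a b c d = mat2_of a' b' c' d' \<longleftrightarrow> a = a' \<and> b = b' \<and> c = c' \<and> d = d'"
  by (metis mat2_of_nth)

lemma orthogonal_matrix_mat2_of:
  "orthogonal_matrix (mat2_of p q r s) \<longleftrightarrow>
     p * p + r * r = 1 \<and> p * q + r * s = 0 \<and> q * q + s * s = 1 \<and> p * p + q * q = 1 \<and> p * r + q * s = 0 \<and> r * r + s * s = 1"
  by (auto simp: orthogonal_matrix_def mat2_of_mult transpose_mat2_of mat_eq_mat2_of mat2_of_eq_iff
      algebra_simps)

lemma symmetric_mat2_eq:
  assumes "transpose M = M"
  shows "M = mat2_of (M$1$1) (M$1$2) (M$1$2) (M$2$2)"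
proof -
  have "M$2$1 = M$1$2"
    using arg_cong[OF assms, of "\<lambda>N. N$1$2"] by (simp add: transpose_def)
  then show ?thesis
    by (metis mat2_eq_mat2_of)
qed

lemma mdiag_nth: "mdiag a $ i $ j = (if i = j then a i else 0)"
  by (simp add: mdiag_def)

lemma mdiag_mult_nth [simp]: "(mdiag a ** M) $ i $ j = a i * M $ i $ j"
  using exhaust_2[of i] by (auto simp: matrix_matrix_mult_def mdiag_def sum_2)

lemma mult_mdiag_nth [simp]: "(M ** mdiag a) $ i $ j = M $ i $ j * a j"
  using exhaust_2[of j] by (auto simp: matrix_matrix_mult_def mdiag_def sum_2)

lemma mdiag_mult_mdiag: "mdiag a ** mdiag b = mdiag (\<lambda>i. a i * b i)"
  by (simp add: vec_eq_iff mdiag_nth)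

lemma mdiag_affine: "mdiag (\<lambda>i. \<alpha> + \<beta> * a i) = \<alpha> *\<^sub>R mat 1 + \<beta> *\<^sub>R mdiag a"
  by (simp add: vec_eq_iff mdiag_nth mat_def)

lemma transpose_mdiag: "transpose (mdiag a) = mdiag a"
  by (simp add: transpose_def vec_eq_iff mdiag_nth)

lemma mdiag_diff_quotient: "(1 / s) *\<^sub>R (mdiag f - mdiag g) = mdiag (\<lambda>i. (f i - g i) / s)"
  by (simp add: vec_eq_iff mdiag_nth)

lemma tendsto_mdiag:
  assumes "\<And>i. ((\<lambda>s. f s i) \<longlongrightarrow> a i) F"
  shows "((\<lambda>s. mdiag (f s)) \<longlongrightarrow> mdiag a) F"
  unfolding mdiag_def by (intro tendsto_vec_lambda) (simp add: assms)

lemma matrix_add_rdistrib: "(B + C) ** (A :: 'a::semiring_1^'n^'m) = B ** A + C ** A"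
  by (simp add: matrix_matrix_mult_def vec_eq_iff sum.distrib distrib_right)

lemma transpose_add: "transpose (A + B) = transpose A + transpose (B :: 'a::semiring_1^'n^'m)"
  by (simp add: transpose_def vec_eq_iff)

lemma sandwich_add: "P ** M ** R + P ** N ** R = P ** (M + N) ** (R :: 'a::semiring_1^'l^'k)"
  by (simp add: matrix_add_ldistrib matrix_add_rdistrib)

lemma sandwich_diff: "P ** M ** R - P ** N ** R = P ** (M - N) ** (R :: 'a::ring_1^'l^'k)"
  by (simp add: matrix_matrix_mult_def vec_eq_iff sum_subtractf left_diff_distrib right_diff_distrib)

lemma sandwich_scaleR: "c *\<^sub>R (P ** M ** R) = P ** (c *\<^sub>R M) ** (R :: 'a::real_algebra_1^'l^'k)"
  by (simp add: scalar_matrix_assoc matrix_scalar_ac)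

lemma orthogonal_sandwich_mult:
  assumes "orthogonal_matrix (Q :: real^'n^'n)"
  shows "(Q ** M ** transpose Q) ** (Q ** N ** transpose Q) = Q ** (M ** N) ** transpose Q"
  using assms unfolding orthogonal_matrix_def by (metis matrix_mul_assoc matrix_mul_rid)

lemma orthogonal_sandwich_transpose:
  assumes "orthogonal_matrix (Q :: real^'n^'n)"
  shows "Q ** (transpose Q ** X ** Q) ** transpose Q = X"
  using assms unfolding orthogonal_matrix_def by (metis matrix_mul_assoc matrix_mul_lid matrix_mul_rid)

lemma tendsto_sandwich:
  fixes P :: "real^'n^'m" and R :: "real^'l^'k"
  assumes "(f \<longlongrightarrow> L) F"
  shows "((\<lambda>s. P ** f s ** R) \<longlongrightarrow> P ** L ** R) F"
proof -
  have "((\<lambda>s. f s $ i $ j) \<longlongrightarrow> L $ i $ j) F" for i j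
    by (intro tendsto_vec_nth assms)
  then show ?thesis
    unfolding matrix_matrix_mult_def
    by (intro vec_tendstoI) (simp add: tendsto_sum tendsto_mult tendsto_const)
qed

section \<open>Spectral decompositions\<close>

lemma symmetric_spec_decomp_exists:
  assumes "transpose M = M"
  shows "\<exists>Q a. spec_decomp M Q a"
proof -
  define p q r where "p = M$1$1" and "q = M$1$2" and "r = M$2$2"
  have M: "M = mat2_of p q q r"
    unfolding p_def q_def r_def by (rule symmetric_mat2_eq[OF assms])
  show ?thesis
  proof (cases "q = 0")
    case True
    then have "spec_decomp M (mat 1) (\<lambda>i. if i = 1 then p else r)"
      by (simp add: spec_decomp_def M orthogonal_matrix_id mdiag_eq_mat2_of)
    then show ?thesis by blast
  next
    case False
    \<comment> \<open>\<open>(q, u)\<close> is an eigenvector for the larger eigenvalue \<open>l = p + u\<close>\<close>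
    define l where "l = (p + r) / 2 + sqrt (((p - r) / 2)^2 + q^2)"
    define u where "u = l - p"
    have "u * (u + p - r) = (sqrt (((p - r) / 2)^2 + q^2))^2 - ((p - r) / 2)^2"
      unfolding u_def l_def by (simp add: power2_eq_square field_simps)
    then have eigen: "u * (u + p - r) = q^2"
      by simp
    define n where "n = sqrt (q^2 + u^2)"
    have n_pos: "n > 0" and n_sq: "n * n = q^2 + u^2"
      using False by (simp_all add: n_def add_pos_nonneg flip: power2_eq_square)
    define Q where "Q = mat2_of (q/n) (-u/n) (u/n) (q/n)"
    have "orthogonal_matrix Q"
      unfolding Q_def orthogonal_matrix_mat2_of using n_pos n_sq False
      by (simp add: field_simps power2_eq_square add_divide_distrib[symmetric])
    moreover have "Q ** mdiag (\<lambda>i. if i = 1 then p + u else r - u) ** transpose Q = M"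
    proof -
      have "Q ** mdiag (\<lambda>i. if i = 1 then p + u else r - u) ** transpose Q =
          mat2_of ((q^2 * (p + u) + u^2 * (r - u)) / (n * n)) (q * u * ((p + u) - (r - u)) / (n * n))
                  (q * u * ((p + u) - (r - u)) / (n * n)) ((u^2 * (p + u) + q^2 * (r - u)) / (n * n))"
        unfolding Q_def using n_pos
        by (simp add: mat2_of_mult transpose_mat2_of mdiag_eq_mat2_of mat2_of_eq_iff power2_eq_square
            field_simps)
      also have "\<dots> = M"
      proof -
        have "n * n \<noteq> 0"
          using n_pos by simp
        then have "(q^2 * (p + u) + u^2 * (r - u)) / (n * n) = p"
             "q * u * ((p + u) - (r - u)) / (n * n) = q"
             "(u^2 * (p + u) + q^2 * (r - u)) / (n * n) = r"
          unfolding n_sq eigen[symmetric] by (simp_all add: field_simps power2_eq_square)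
        then show ?thesis
          unfolding M by (simp only:)
      qed
      finally show ?thesis .
    qed
    ultimately show ?thesis
      unfolding spec_decomp_def by metis
  qed
qed

lemma spec_decomp_fun_unique:
  assumes "spec_decomp M P b" and "spec_decomp M R c"
  shows "P ** mdiag (\<lambda>i. f (b i)) ** transpose P = R ** mdiag (\<lambda>i. f (c i)) ** transpose R"
proof -
  have P: "transpose P ** P = mat 1" "P ** transpose P = mat 1"
    and R: "transpose R ** R = mat 1" "R ** transpose R = mat 1"
    and MP: "M = P ** mdiag b ** transpose P" and MR: "M = R ** mdiag c ** transpose R"
    using assms unfolding spec_decomp_def orthogonal_matrix_def by auto
  define C where "C = transpose R ** P"
  \<comment> \<open>\<open>C\<close> intertwines \<open>diag b\<close> and \<open>diag c\<close>, hence also \<open>diag (f \<circ> b)\<close> and \<open>diag (f \<circ> c)\<close>\<close>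
  have "C ** mdiag b = transpose R ** M ** P"
    unfolding MP C_def by (metis P(1) matrix_mul_assoc matrix_mul_rid)
  also have "\<dots> = mdiag c ** C"
    unfolding MR C_def by (metis R(1) matrix_mul_assoc matrix_mul_lid)
  finally have intertwine: "C$i$j * b j = c i * C$i$j" for i j
    by (metis mdiag_mult_nth mult_mdiag_nth)
  have "C$i$j * f (b j) = f (c i) * C$i$j" for i j
    using intertwine[of i j] by (cases "C$i$j = 0") auto
  then have "C ** mdiag (\<lambda>i. f (b i)) = mdiag (\<lambda>i. f (c i)) ** C"
    by (simp add: vec_eq_iff)
  then have "R ** (C ** mdiag (\<lambda>i. f (b i))) ** transpose P
      = R ** (mdiag (\<lambda>i. f (c i)) ** C) ** transpose P"
    by simp
  then show ?thesis
    unfolding C_def by (simp add: matrix_mul_assoc R(2)) (simp add: matrix_mul_assoc[symmetric] P(2))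
qed

lemma mlog_spec_decomp:
  assumes "spec_decomp M P b"
  shows "mlog M = P ** mdiag (\<lambda>i. ln (b i)) ** transpose P"
proof -
  have "\<exists>L. \<exists>Q a. spec_decomp M Q a \<and> L = Q ** mdiag (\<lambda>i. ln (a i)) ** transpose Q"
    using assms by blast
  from someI_ex[OF this] obtain Q a where
    "spec_decomp M Q a" "mlog M = Q ** mdiag (\<lambda>i. ln (a i)) ** transpose Q"
    unfolding mlog_def by blast
  then show ?thesis
    using spec_decomp_fun_unique[OF assms, of _ _ ln] by metis
qed

lemma spec_decomp_mdiag: "spec_decomp (mdiag a) (mat 1) a"
  by (simp add: spec_decomp_def orthogonal_matrix_id)

lemma mlog_mdiag: "mlog (mdiag a) = mdiag (\<lambda>i. ln (a i))"
  using mlog_spec_decomp[OF spec_decomp_mdiag] by simp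

lemma spec_decomp_affine:
  assumes "spec_decomp M P b"
  shows "P ** mdiag (\<lambda>i. \<alpha> + \<beta> * b i) ** transpose P = \<alpha> *\<^sub>R mat 1 + \<beta> *\<^sub>R M"
  using assms unfolding spec_decomp_def orthogonal_matrix_def mdiag_affine
  by (simp add: matrix_add_ldistrib matrix_add_rdistrib matrix_scalar_ac
      flip: scalar_matrix_assoc)

lemma spec_decomp_trace_det:
  assumes "spec_decomp M P b"
  shows "trace M = b 1 + b 2" and "det M = b 1 * b 2"
proof -
  have P: "transpose P ** P = mat 1" "P ** transpose P = mat 1"
    and MP: "M = P ** mdiag b ** transpose P"
    using assms unfolding spec_decomp_def orthogonal_matrix_def by auto
  have "trace M = trace (transpose P ** (P ** mdiag b))"
    unfolding MP by (rule trace_mul_sym)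
  then show "trace M = b 1 + b 2"
    by (simp add: matrix_mul_assoc P trace_def sum_2 mdiag_nth)
  have "det P * det P = 1"
    using P by (metis det_I det_mul det_transpose)
  then have "det M = det (mdiag b)"
    unfolding MP by (simp add: det_mul)
  then show "det M = b 1 * b 2"
    by (simp add: det_2 mdiag_nth)
qed

lemma mlog_orthogonal_sandwich:
  assumes "orthogonal_matrix Q" and "transpose M = M"
  shows "mlog (Q ** M ** transpose Q) = Q ** mlog M ** transpose Q"
proof -
  obtain P b where Pb: "spec_decomp M P b"
    using symmetric_spec_decomp_exists[OF assms(2)] by blast
  then have "spec_decomp (Q ** M ** transpose Q) (Q ** P) b"
    using assms(1) unfolding spec_decomp_def
    by (auto simp: orthogonal_matrix_mul matrix_transpose_mul matrix_mul_assoc)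
  then show ?thesis
    unfolding mlog_spec_decomp[OF Pb]
    by (simp add: mlog_spec_decomp matrix_transpose_mul matrix_mul_assoc)
qed

lemma spd_spec_decomp_pos:
  assumes "spd A" and "spec_decomp A Q a"
  shows "a i > 0"
proof -
  have Q: "transpose Q ** Q = mat 1" and AQ: "A = Q ** mdiag a ** transpose Q"
    using assms(2) unfolding spec_decomp_def orthogonal_matrix_def by auto
  define e :: "real^2" where "e = axis i 1"
  define x where "x = Q *v e"
  have e: "transpose Q *v x = e"
    by (simp add: x_def matrix_vector_mul_assoc Q del: transpose_matrix_vector)
  then have "x \<noteq> 0"
    by (metis axis_nth e_def matrix_vector_mult_0_right zero_index zero_neq_one)
  have "mdiag a *v e = a i *\<^sub>R e"
    using exhaust_2[of i] by (auto simp: e_def vec_eq_iff matrix_vector_mult_def mdiag_def axis_def sum_2)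
  then have "A *v x = a i *\<^sub>R x"
    unfolding AQ matrix_vector_mul_assoc[symmetric] e
    by (simp add: matrix_vector_mult_scaleR x_def)
  then have "a i * (x \<bullet> x) > 0"
    using assms(1) \<open>x \<noteq> 0\<close> unfolding spd_def by (metis inner_scaleR_right)
  moreover have "x \<bullet> x > 0"
    using \<open>x \<noteq> 0\<close> by simp
  ultimately show ?thesis
    by (simp add: zero_less_mult_iff)
qed

lemma matrix_inv_unique:
  fixes A :: "'a::semiring_1^'n^'m"
  assumes "A ** B = mat 1" and "B ** A = mat 1"
  shows "matrix_inv A = B"
proof -
  have "A ** matrix_inv A = mat 1" "matrix_inv A ** A = mat 1"
    using someI_ex[of "\<lambda>B. A ** B = mat 1 \<and> B ** A = mat 1"] assms
    unfolding matrix_inv_def by blast+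
  then show ?thesis
    by (metis assms(1) matrix_mul_assoc matrix_mul_lid matrix_mul_rid)
qed

lemma matrix_inv_spec_decomp:
  assumes "spd A" and "spec_decomp A Q a"
  shows "matrix_inv A = Q ** mdiag (\<lambda>i. 1 / a i) ** transpose Q"
proof (rule matrix_inv_unique)
  have Q: "orthogonal_matrix Q" and AQ: "A = Q ** mdiag a ** transpose Q"
    using assms(2) unfolding spec_decomp_def by auto
  have "mdiag a ** mdiag (\<lambda>i. 1 / a i) = mat 1" "mdiag (\<lambda>i. 1 / a i) ** mdiag a = mat 1"
    using spd_spec_decomp_pos[OF assms] by (simp_all add: mdiag_mult_mdiag vec_eq_iff mdiag_nth mat_def
        less_imp_neq[symmetric])
  then show "A ** (Q ** mdiag (\<lambda>i. 1 / a i) ** transpose Q) = mat 1"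
    and "Q ** mdiag (\<lambda>i. 1 / a i) ** transpose Q ** A = mat 1"
    using Q unfolding AQ orthogonal_sandwich_mult[OF Q] orthogonal_matrix_def by simp_all
qed

lemma log_delta_spec_decomp:
  assumes "spec_decomp A Q a"
  shows "log_delta A = \<bar>ln (a 1) - ln (a 2)\<bar> / 2"
proof -
  have "spec_decomp (mlog A) Q (\<lambda>i. ln (a i))"
    using assms by (simp add: spec_decomp_def mlog_spec_decomp)
  then have "(trace (mlog A))^2 - 4 * det (mlog A) = (ln (a 1) - ln (a 2))^2"
    by (simp add: spec_decomp_trace_det power2_eq_square algebra_simps)
  then show ?thesis
    by (simp add: log_delta_def)
qed

section \<open>The Daleckii--Krein expression in closed form\<close>

lemma Flog_sym: "Flog x y = Flog y x"
  unfolding Flog_def by (metis minus_diff_eq minus_divide_divide)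

lemma half_plus_theta_over:
  assumes "u \<noteq> 0"
  shows "1/2 + theta_over (\<bar>u\<bar> / 2) / 8 * u^2 = u / (2 * sinh u)"
proof -
  define d where "d = \<bar>u\<bar> / 2"
  have "d \<noteq> 0" and "u^2 = 4 * d^2"
    using assms by (simp_all add: d_def power2_eq_square)
  then have "1/2 + theta_over d / 8 * u^2 = d / sinh (2 * d)"
    by (simp add: theta_over_def theta_def field_simps power2_eq_square)
  also have "\<dots> = u / (2 * sinh u)"
    by (cases "u > 0") (simp_all add: d_def)
  finally show ?thesis
    by (simp add: d_def)
qed

lemma Flog_eq_theta_over:
  assumes "0 < x" and "0 < y"
  shows "Flog x y = (1/x + 1/y) * (1/2 + theta_over (\<bar>ln x - ln y\<bar> / 2) / 8 * (ln x - ln y)^2)"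
proof (cases "x = y")
  case True
  then show ?thesis
    by (simp add: Flog_def)
next
  case False
  define u where "u = ln x - ln y"
  have "u \<noteq> 0"
    using False assms by (simp add: u_def)
  have "u = ln (x / y)"
    using assms by (simp add: u_def ln_div)
  then have "2 * sinh u = (1/x + 1/y) * (x - y)"
    using assms by (simp add: sinh_ln_real field_simps)
  moreover have "1/x + 1/y > 0"
    using assms by (intro add_pos_pos) simp_all
  ultimately have "u / (x - y) = (1/x + 1/y) * (u / (2 * sinh u))"
    by simp
  also have "\<dots> = (1/x + 1/y) * (1/2 + theta_over (\<bar>u\<bar> / 2) / 8 * u^2)"
    by (simp only: half_plus_theta_over[OF \<open>u \<noteq> 0\<close>])
  finally show ?thesis
    using False by (simp add: Flog_def u_def)
qed

lemma DK_log_eq_dlog_rhs: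
  assumes "spd A" and "spec_decomp A Q a"
  shows "DK_log Q a X = dlog_rhs A X"
proof -
  have Q: "orthogonal_matrix Q"
    using assms(2) unfolding spec_decomp_def by simp
  have pos: "0 < a i" for i
    by (rule spd_spec_decomp_pos[OF assms])
  define Y where "Y = transpose Q ** X ** Q"
  define L where "L = mdiag (\<lambda>i. ln (a i))"
  define Ai where "Ai = mdiag (\<lambda>i. 1 / a i)"
  define c where "c = theta_over (log_delta A) / 8"
  define Z where "Z = L ** L ** Y - 2 *\<^sub>R (L ** Y ** L) + Y ** L ** L"
  have X: "X = Q ** Y ** transpose Q"
    unfolding Y_def using orthogonal_sandwich_transpose[OF Q] by simp
  have rhs: "dlog_rhs A X = Q ** ((1/2) *\<^sub>R (Ai ** Y + Y ** Ai) + c *\<^sub>R (Ai ** Z + Z ** Ai)) ** transpose Q"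
    unfolding dlog_rhs_def Let_def mlog_spec_decomp[OF assms(2)] matrix_inv_spec_decomp[OF assms]
      c_def[symmetric] L_def[symmetric] Ai_def[symmetric] X Z_def
    by (simp only: orthogonal_sandwich_mult[OF Q] sandwich_add sandwich_diff sandwich_scaleR)
  have entry: "((1/2) *\<^sub>R (Ai ** Y + Y ** Ai) + c *\<^sub>R (Ai ** Z + Z ** Ai)) $ i $ j
      = (1 / a i + 1 / a j) * (1/2 + c * (ln (a i) - ln (a j))^2) * Y $ i $ j" for i j
    unfolding Z_def L_def Ai_def using pos[of i] pos[of j]
    by (simp add: matrix_mul_assoc[symmetric] mdiag_mult_mdiag power2_eq_square field_simps)
  have coeff: "(1 / a i + 1 / a j) * (1/2 + c * (ln (a i) - ln (a j))^2) = Flog (a i) (a j)" for i j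
  proof (cases "i = j")
    case True
    then show ?thesis
      by (simp add: Flog_def)
  next
    case False
    then have "\<bar>ln (a i) - ln (a j)\<bar> = \<bar>ln (a 1) - ln (a 2)\<bar>"
      using exhaust_2[of i] exhaust_2[of j] by (auto simp: abs_minus_commute)
    then show ?thesis
      using Flog_eq_theta_over[OF pos pos, of i j]
      by (simp add: c_def log_delta_spec_decomp[OF assms(2)])
  qed
  then have "(1/2) *\<^sub>R (Ai ** Y + Y ** Ai) + c *\<^sub>R (Ai ** Z + Z ** Ai)
      = (\<chi> i j. Flog (a i) (a j) * Y $ i $ j)"
    unfolding vec_eq_iff vec_lambda_beta entry coeff by simp
  then show ?thesis
    unfolding rhs DK_log_def Y_def by simp
qed

section \<open>The derivative of the matrix logarithm\<close>

lemma mlog_eq_divided_difference: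
  assumes "transpose M = M" and "trace M = x + y" and "det M = x * y"
  shows "mlog M = ln x *\<^sub>R mat 1 + Flog x y *\<^sub>R (M - x *\<^sub>R mat 1)"
proof -
  obtain P b where Pb: "spec_decomp M P b"
    using symmetric_spec_decomp_exists[OF assms(1)] by blast
  have "b i * b i - (x + y) * b i + x * y = 0" for i
    unfolding assms(2,3)[symmetric] spec_decomp_trace_det[OF Pb]
    using exhaust_2[of i] by (auto simp: algebra_simps)
  then have "(b i - x) * (b i - y) = 0" for i
    by (simp add: algebra_simps)
  then have roots: "b i = x \<or> b i = y" for i
    by simp
  \<comment> \<open>so \<open>ln\<close> agrees on the spectrum with its linear interpolant at \<open>x\<close> and \<open>y\<close>\<close>
  have "Flog x y * (b i - x) = ln (b i) - ln x" for i
    using roots[of i] by (cases "x = y") (auto simp: Flog_def divide_simps algebra_simps)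
  then have "ln (b i) = (ln x - Flog x y * x) + Flog x y * b i" for i
    by (simp add: algebra_simps)
  then have "mlog M = (ln x - Flog x y * x) *\<^sub>R mat 1 + Flog x y *\<^sub>R M"
    by (simp add: mlog_spec_decomp[OF Pb] spec_decomp_affine[OF Pb])
  then show ?thesis
    by (simp add: scaleR_diff_left scaleR_diff_right)
qed

lemma tendsto_Flog:
  assumes "(f \<longlongrightarrow> x) F" and "(g \<longlongrightarrow> y) F" and "x \<noteq> y" and "0 < x" and "0 < y"
  shows "((\<lambda>s. Flog (f s) (g s)) \<longlongrightarrow> Flog x y) F"
proof -
  have "((\<lambda>s. f s - g s) \<longlongrightarrow> x - y) F"
    using assms(1,2) by (rule tendsto_diff)
  then have "eventually (\<lambda>s. f s - g s \<noteq> 0) F"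
    using assms(3) by (intro tendsto_imp_eventually_ne) auto
  then have "eventually (\<lambda>s. (ln (f s) - ln (g s)) / (f s - g s) = Flog (f s) (g s)) F"
    by (auto elim: eventually_mono simp: Flog_def)
  moreover have "((\<lambda>s. (ln (f s) - ln (g s)) / (f s - g s)) \<longlongrightarrow> Flog x y) F"
    using assms by (auto intro!: tendsto_intros simp: Flog_def)
  ultimately show ?thesis
    by (rule Lim_transform_eventually[rotated])
qed

lemma difference_quotient_tendsto:
  assumes "(f has_real_derivative D) (at 0)"
  shows "((\<lambda>s. (f s - f 0) / s) \<longlongrightarrow> D) (at 0)"
  using assms unfolding has_field_derivative_iff by simp

lemma half_gap_has_derivative:
  assumes "d \<noteq> 0"
  shows "((\<lambda>s. sqrt (((d + s * e) / 2)^2 + (s * c)^2)) has_real_derivative sgn d * e / 2) (at 0)"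
proof -
  define D where "D s = ((d + s * e) / 2)^2 + (s * c)^2" for s
  have "D 0 > 0" and sqrt_D0: "sqrt (D 0) = \<bar>d\<bar> / 2"
    using assms by (simp_all add: D_def real_sqrt_abs)
  have "(D has_real_derivative d * e / 2) (at 0)"
    unfolding D_def power2_eq_square by (auto intro!: derivative_eq_intros simp: field_simps)
  then have "((\<lambda>s. sqrt (D s)) has_real_derivative inverse (sqrt (D 0)) / 2 * (d * e / 2)) (at 0)"
    by (rule DERIV_chain2[where f = sqrt and g = D, OF DERIV_real_sqrt[OF \<open>D 0 > 0\<close>]])
  moreover have "inverse (sqrt (D 0)) / 2 * (d * e / 2) = sgn d * e / 2"
    using assms by (cases "d > 0") (simp_all add: sqrt_D0 field_simps)
  ultimately show ?thesis
    unfolding D_def by metis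
qed

lemma simple_eigenvalue_branches:
  fixes a :: "2 \<Rightarrow> real" and Y :: mat2
  assumes "a 1 \<noteq> a 2" and "transpose Y = Y"
  obtains l :: "2 \<Rightarrow> real \<Rightarrow> real" where
    "\<And>s. trace (mdiag a + s *\<^sub>R Y) = l 1 s + l 2 s"
    "\<And>s. det (mdiag a + s *\<^sub>R Y) = l 1 s * l 2 s"
    "\<And>i. l i 0 = a i"
    "\<And>i. (l i has_real_derivative Y $ i $ i) (at 0)"
proof -
  define d e where "d = a 1 - a 2" and "e = Y$1$1 - Y$2$2"
  define \<epsilon> :: "2 \<Rightarrow> real" where "\<epsilon> i = (if i = 1 then sgn d else - sgn d)" for i
  define m where "m s = (a 1 + a 2 + s * (Y$1$1 + Y$2$2)) / 2" for s
  define D where "D s = ((d + s * e) / 2)^2 + (s * Y$1$2)^2" for s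
  define l where "l i s = m s + \<epsilon> i * sqrt (D s)" for i s
  have "d \<noteq> 0"
    using assms(1) by (simp add: d_def)
  have \<epsilon>: "\<epsilon> i * \<epsilon> i = 1" "\<epsilon> 1 = - \<epsilon> 2" "\<epsilon> i * \<bar>d\<bar> = (if i = 1 then d else - d)" for i
    using \<open>d \<noteq> 0\<close> by (auto simp: \<epsilon>_def sgn_if)
  have sqrt_D0: "sqrt (D 0) = \<bar>d\<bar> / 2"
    by (simp add: D_def real_sqrt_abs)
  have "(m has_real_derivative (Y$1$1 + Y$2$2) / 2) (at 0)"
    unfolding m_def by (auto intro!: derivative_eq_intros)
  then have "(l i has_real_derivative (Y$1$1 + Y$2$2) / 2 + \<epsilon> i * (sgn d * e / 2)) (at 0)" for i
    unfolding l_def D_def by (intro DERIV_add DERIV_cmult half_gap_has_derivative \<open>d \<noteq> 0\<close>)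
  moreover have "(Y$1$1 + Y$2$2) / 2 + \<epsilon> i * (sgn d * e / 2) = Y $ i $ i" for i
    using exhaust_2[of i] \<open>d \<noteq> 0\<close> by (auto simp: \<epsilon>_def e_def sgn_if field_simps)
  ultimately have "(l i has_real_derivative Y $ i $ i) (at 0)" for i
    by metis
  moreover have "l i 0 = a i" for i
    using exhaust_2[of i] \<epsilon>(3)[of i] by (auto simp: l_def m_def sqrt_D0 d_def field_simps)
  moreover have "trace (mdiag a + s *\<^sub>R Y) = l 1 s + l 2 s" for s
    by (simp add: l_def m_def \<epsilon>(2) trace_def sum_2 mdiag_nth field_simps)
  moreover have "det (mdiag a + s *\<^sub>R Y) = l 1 s * l 2 s" for s
  proof -
    have Y21: "Y$2$1 = Y$1$2"
      using symmetric_mat2_eq[OF assms(2)] by (metis mat2_of_nth(3))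
    have "l 1 s * l 2 s = m s * m s - (\<epsilon> 2 * \<epsilon> 2) * (sqrt (D s) * sqrt (D s))"
      by (simp add: l_def \<epsilon>(2) algebra_simps)
    also have "\<dots> = m s * m s - D s"
      by (simp add: \<epsilon>(1) D_def)
    also have "\<dots> = det (mdiag a + s *\<^sub>R Y)"
      by (simp add: m_def D_def d_def e_def Y21 det_2 mdiag_nth power2_eq_square field_simps)
    finally show ?thesis ..
  qed
  ultimately show thesis
    using that by blast
qed

lemma mlog_mdiag_perturbation_nth:
  fixes x :: "2 \<Rightarrow> real"
  assumes "transpose Y = Y"
    and trace: "trace (mdiag a + s *\<^sub>R Y) = x 1 + x 2" and det: "det (mdiag a + s *\<^sub>R Y) = x 1 * x 2"
  shows "mlog (mdiag a + s *\<^sub>R Y) $ i $ j =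
    (if i = j then ln (x i) + Flog (x 1) (x 2) * (a i + s * Y $ i $ i - x i)
     else Flog (x 1) (x 2) * (s * Y $ i $ j))"
proof -
  have sym: "transpose (mdiag a + s *\<^sub>R Y) = mdiag a + s *\<^sub>R Y"
    using assms(1) by (simp add: transpose_add transpose_scalar transpose_mdiag)
  \<comment> \<open>interpolating at either eigenvalue gives the same matrix\<close>
  have "mlog (mdiag a + s *\<^sub>R Y)
      = ln (x i) *\<^sub>R mat 1 + Flog (x 1) (x 2) *\<^sub>R (mdiag a + s *\<^sub>R Y - x i *\<^sub>R mat 1)"
  proof (cases "i = 1")
    case True
    then show ?thesis
      using mlog_eq_divided_difference[OF sym trace det] by simp
  next
    case False
    then have "i = 2"
      using exhaust_2[of i] by blast
    then show ?thesis
      using mlog_eq_divided_difference[OF sym, of "x 2" "x 1"] trace det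
      by (simp add: Flog_sym add.commute mult.commute)
  qed
  then show ?thesis
    by (simp add: mdiag_nth mat_def)
qed

lemma mlog_mdiag_difference_quotient_nth:
  fixes x :: "2 \<Rightarrow> real"
  assumes "transpose Y = Y" and "s \<noteq> 0"
    and "trace (mdiag a + s *\<^sub>R Y) = x 1 + x 2" and "det (mdiag a + s *\<^sub>R Y) = x 1 * x 2"
  shows "((1 / s) *\<^sub>R (mlog (mdiag a + s *\<^sub>R Y) - mlog (mdiag a))) $ i $ j =
    (if i = j then (ln (x i) - ln (a i)) / s + Flog (x 1) (x 2) * (Y $ i $ i - (x i - a i) / s)
     else Flog (x 1) (x 2) * Y $ i $ j)"
  using assms(2) mlog_mdiag_perturbation_nth[OF assms(1,3,4), of i j]
  by (simp add: mlog_mdiag mdiag_nth field_simps)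

lemma mlog_mdiag_derivative_distinct:
  assumes pos: "\<And>i. 0 < a i" and "a 1 \<noteq> a 2" and "transpose Y = Y"
  shows "((\<lambda>s. (1 / s) *\<^sub>R (mlog (mdiag a + s *\<^sub>R Y) - mlog (mdiag a)))
           \<longlongrightarrow> (\<chi> i j. Flog (a i) (a j) * Y $ i $ j)) (at 0)"
proof -
  obtain l where trace: "\<And>s. trace (mdiag a + s *\<^sub>R Y) = l 1 s + l 2 s"
    and det: "\<And>s. det (mdiag a + s *\<^sub>R Y) = l 1 s * l 2 s"
    and l0: "\<And>i. l i 0 = a i" and l': "\<And>i. (l i has_real_derivative Y $ i $ i) (at 0)"
    using simple_eigenvalue_branches[OF assms(2,3)] by blast
  define \<beta> where "\<beta> s = Flog (l 1 s) (l 2 s)" for s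
  define q where "q i j s = (if i = j then (ln (l i s) - ln (a i)) / s + \<beta> s * (Y $ i $ i - (l i s - a i) / s)
    else \<beta> s * Y $ i $ j)" for i j s
  have "q i j s = ((1 / s) *\<^sub>R (mlog (mdiag a + s *\<^sub>R Y) - mlog (mdiag a))) $ i $ j"
    if "s \<noteq> 0" for i j s
    unfolding q_def \<beta>_def
    by (rule mlog_mdiag_difference_quotient_nth[where x = "\<lambda>i. l i s", OF assms(3) that trace det, symmetric])
  moreover have "eventually (\<lambda>s. s \<noteq> 0) (at (0::real))"
    by (simp add: eventually_at_filter)
  ultimately have quotient: "eventually (\<lambda>s. q i j s =
      ((1 / s) *\<^sub>R (mlog (mdiag a + s *\<^sub>R Y) - mlog (mdiag a))) $ i $ j) (at 0)" for i j
    by (auto elim: eventually_mono)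
  have \<beta>_lim: "(\<beta> \<longlongrightarrow> Flog (a 1) (a 2)) (at 0)"
    unfolding \<beta>_def
    using DERIV_continuous[OF l'[of 1]] DERIV_continuous[OF l'[of 2]] assms(2) pos
    by (intro tendsto_Flog) (simp_all add: continuous_within l0)
  have ln_quot: "((\<lambda>s. (ln (l i s) - ln (l i 0)) / s) \<longlongrightarrow> Y $ i $ i / a i) (at 0)"
    and l_quot: "((\<lambda>s. (l i s - l i 0) / s) \<longlongrightarrow> Y $ i $ i) (at 0)" for i
    using pos[of i] l0[of i]
    by (intro difference_quotient_tendsto; auto intro!: derivative_eq_intros l')+
  have diag: "((\<lambda>s. q i i s) \<longlongrightarrow> Y $ i $ i / a i + Flog (a 1) (a 2) * (Y $ i $ i - Y $ i $ i)) (at 0)"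
    for i
    unfolding q_def if_P[OF refl]
    by (intro tendsto_intros ln_quot[unfolded l0] l_quot[unfolded l0] \<beta>_lim)
  have entry: "((\<lambda>s. q i j s) \<longlongrightarrow> Flog (a i) (a j) * Y $ i $ j) (at 0)" for i j
  proof (cases "i = j")
    case True
    then show ?thesis
      using diag[of i] by (simp add: Flog_def)
  next
    case False
    then have "Flog (a i) (a j) = Flog (a 1) (a 2)"
      using exhaust_2[of i] exhaust_2[of j] by (auto simp: Flog_sym)
    then show ?thesis
      using False unfolding q_def by (auto intro!: tendsto_intros \<beta>_lim)
  qed
  show ?thesis
  proof (intro vec_tendstoI)
    fix i j
    show "((\<lambda>s. ((1 / s) *\<^sub>R (mlog (mdiag a + s *\<^sub>R Y) - mlog (mdiag a))) $ i $ j)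
        \<longlongrightarrow> (\<chi> i j. Flog (a i) (a j) * Y $ i $ j) $ i $ j) (at 0)"
      using Lim_transform_eventually[OF entry quotient] by simp
  qed
qed

lemma mlog_scalar_derivative:
  assumes "0 < c" and "transpose Y = Y"
  shows "((\<lambda>s. (1 / s) *\<^sub>R (mlog (c *\<^sub>R mat 1 + s *\<^sub>R Y) - mlog (c *\<^sub>R mat 1)))
           \<longlongrightarrow> (1 / c) *\<^sub>R Y) (at 0)"
proof -
  obtain P \<mu> where P\<mu>: "spec_decomp Y P \<mu>"
    using symmetric_spec_decomp_exists[OF assms(2)] by blast
  \<comment> \<open>a scalar matrix is diagonal in every basis, so an eigenbasis of \<open>Y\<close> diagonalises the whole path\<close>
  have "spec_decomp (c *\<^sub>R mat 1 + s *\<^sub>R Y) P (\<lambda>i. c + s * \<mu> i)" for s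
    using P\<mu> by (simp add: spec_decomp_def spec_decomp_affine[OF P\<mu>])
  then have mlog_path: "mlog (c *\<^sub>R mat 1 + s *\<^sub>R Y) = P ** mdiag (\<lambda>i. ln (c + s * \<mu> i)) ** transpose P"
    for s
    by (rule mlog_spec_decomp)
  have "mlog (c *\<^sub>R mat 1) = P ** mdiag (\<lambda>i. ln c) ** transpose P"
    using mlog_path[of 0] by simp
  then have quotient: "(1 / s) *\<^sub>R (mlog (c *\<^sub>R mat 1 + s *\<^sub>R Y) - mlog (c *\<^sub>R mat 1))
      = P ** mdiag (\<lambda>i. (ln (c + s * \<mu> i) - ln c) / s) ** transpose P" for s
    unfolding mlog_path by (simp only: sandwich_diff sandwich_scaleR mdiag_diff_quotient)
  have "((\<lambda>s. ln (c + s * \<mu> i)) has_real_derivative \<mu> i / c) (at 0)" for i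
    using assms(1) by (auto intro!: derivative_eq_intros)
  from difference_quotient_tendsto[OF this]
  have "((\<lambda>s. (ln (c + s * \<mu> i) - ln c) / s) \<longlongrightarrow> 0 + 1 / c * \<mu> i) (at 0)" for i
    by simp
  then have "((\<lambda>s. P ** mdiag (\<lambda>i. (ln (c + s * \<mu> i) - ln c) / s) ** transpose P)
      \<longlongrightarrow> P ** mdiag (\<lambda>i. 0 + 1 / c * \<mu> i) ** transpose P) (at 0)"
    by (intro tendsto_sandwich tendsto_mdiag)
  then show ?thesis
    unfolding quotient spec_decomp_affine[OF P\<mu>] by simp
qed

lemma mlog_mdiag_derivative:
  assumes "\<And>i. 0 < a i" and "transpose Y = Y"
  shows "((\<lambda>s. (1 / s) *\<^sub>R (mlog (mdiag a + s *\<^sub>R Y) - mlog (mdiag a)))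
           \<longlongrightarrow> (\<chi> i j. Flog (a i) (a j) * Y $ i $ j)) (at 0)"
proof (cases "a 1 = a 2")
  case True
  define c where "c = a 1"
  have c: "a i = c" for i
    using True exhaust_2[of i] by (auto simp: c_def)
  then have "mdiag a = c *\<^sub>R mat 1" and "(\<chi> i j. Flog (a i) (a j) * Y $ i $ j) = (1 / c) *\<^sub>R Y"
    by (simp_all add: vec_eq_iff mdiag_nth mat_def Flog_def)
  then show ?thesis
    using mlog_scalar_derivative[OF assms(1)[of 1, unfolded c] assms(2)] by simp
next
  case False
  show ?thesis
    using assms(1) False assms(2) by (rule mlog_mdiag_derivative_distinct)
qed

lemma mlog_derivative_DK_log:
  assumes "spd A" and "spec_decomp A Q a" and "transpose X = X"
  shows "((\<lambda>s. (1 / s) *\<^sub>R (mlog (A + s *\<^sub>R X) - mlog A)) \<longlongrightarrow> DK_log Q a X) (at 0)"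
proof -
  have Q: "orthogonal_matrix Q" and A: "A = Q ** mdiag a ** transpose Q"
    using assms(2) unfolding spec_decomp_def by auto
  define Y where "Y = transpose Q ** X ** Q"
  have "transpose Y = Y"
    using assms(3) by (simp add: Y_def matrix_transpose_mul matrix_mul_assoc)
  then have sym: "transpose (mdiag a + s *\<^sub>R Y) = mdiag a + s *\<^sub>R Y" for s
    by (simp add: transpose_add transpose_scalar transpose_mdiag)
  have "X = Q ** Y ** transpose Q"
    unfolding Y_def by (rule orthogonal_sandwich_transpose[OF Q, symmetric])
  then have "A + s *\<^sub>R X = Q ** (mdiag a + s *\<^sub>R Y) ** transpose Q" for s
    unfolding A by (simp only: sandwich_scaleR sandwich_add)
  then have mlog_path: "mlog (A + s *\<^sub>R X) = Q ** mlog (mdiag a + s *\<^sub>R Y) ** transpose Q" for s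
    by (simp add: mlog_orthogonal_sandwich[OF Q sym])
  have "mlog A = Q ** mlog (mdiag a) ** transpose Q"
    using mlog_path[of 0] by simp
  then have "(1 / s) *\<^sub>R (mlog (A + s *\<^sub>R X) - mlog A)
      = Q ** ((1 / s) *\<^sub>R (mlog (mdiag a + s *\<^sub>R Y) - mlog (mdiag a))) ** transpose Q" for s
    unfolding mlog_path by (simp only: sandwich_diff sandwich_scaleR)
  moreover have "((\<lambda>s. Q ** ((1 / s) *\<^sub>R (mlog (mdiag a + s *\<^sub>R Y) - mlog (mdiag a))) ** transpose Q)
      \<longlongrightarrow> DK_log Q a X) (at 0)"
    unfolding DK_log_def Y_def[symmetric]
    using spd_spec_decomp_pos[OF assms(1,2)] \<open>transpose Y = Y\<close>
    by (intro tendsto_sandwich mlog_mdiag_derivative)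
  ultimately show ?thesis
    by simp
qed

theorem mainTheorem9:
  fixes A :: mat2
  assumes "spd A"
  shows "(\<forall>X::mat2. transpose X = X \<longrightarrow>
            ((\<lambda>s. (1 / s) *\<^sub>R (mlog (A + s *\<^sub>R X) - mlog A)) \<longlongrightarrow> dlog_rhs A X) (at 0))
       \<and> (\<forall>X::mat2. \<forall>Q a. spec_decomp A Q a \<longrightarrow> DK_log Q a X = dlog_rhs A X)"
proof (intro conjI allI impI)
  fix X :: mat2
  assume "transpose X = X"
  obtain Q a where Qa: "spec_decomp A Q a"
    using assms symmetric_spec_decomp_exists unfolding spd_def by blast
  show "((\<lambda>s. (1 / s) *\<^sub>R (mlog (A + s *\<^sub>R X) - mlog A)) \<longlongrightarrow> dlog_rhs A X) (at 0)"
    using mlog_derivative_DK_log[OF assms Qa \<open>transpose X = X\<close>]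
    unfolding DK_log_eq_dlog_rhs[OF assms Qa] .
next
  fix X Q a
  assume "spec_decomp A Q a"
  then show "DK_log Q a X = dlog_rhs A X"
    by (rule DK_log_eq_dlog_rhs[OF assms])
qed

end
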